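(* Let $\lambda>0$ be constant and let $\alpha:[-1,1]\times[0,\infty)\to\mathbb{R}^2$ be a solution of the length-penalised elastic flow $\partial_t\alpha=(k_{ss}+\frac12k^3-\lambda k)\nu$ with generalised Neumann boundary conditions in the cone. Then $$\frac{d}{dt}\int_\alpha k_s^2\,ds\le-\frac18\int_\alpha k_{s^3}^2\,ds-\frac{13}{6}\bar k^4\int_\alpha k_s^2\,ds-2\lambda\int_\alpha k_{ss}^2\,ds+14\lambda\Big(\|k-\bar k\|_\infty^2+\bar k^2\Big)\int_\alpha k_s^2\,ds$$ $$\qquad-22\bar k^3\int_\alpha(k-\bar k)k_s^2\,ds+5\int_\alpha(k-\bar k)^2k_{ss}^2\,ds+10\bar k\int_\alpha(k-\bar k)k_{ss}^2\,ds.$$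
   Context: The cone: fix $0\le\theta_2<\theta_1<2\pi$; its boundary consists of the open rays $\bar\gamma_i=\{(\rho\cos\theta_i,\rho\sin\theta_i):\rho>0\}$, $i=1,2$. The flow evolves with generalised Neumann boundary conditions: for each $t$ the curve's interior lies in the open cone between the rays, $\alpha(-1,t)\in\bar\gamma_1$, $\alpha(1,t)\in\bar\gamma_2$, the curve meets each ray perpendicularly, and $k_s(\pm1,t)=0$ (neither end reaches the cone tip). Here $s$ is arc length, $\nu$ the outer unit normal, $k=-\langle\alpha_{ss},\nu\rangle$ the scalar curvature, $k_{s^\ell}$ its $\ell$-th arc-length derivative, $L$ the length, $\bar k=\frac1L\int_\alpha k\,ds$, and $\|\cdot\|_\infty$ the sup norm over the curve. Integrals are over $\alpha(\cdot,t)$ with respect to arc length. *)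

theory Defs
  imports "HOL-Analysis.Analysis"
begin

text \<open>Planar curves are modelled in the complex plane; the inner product on complex
  numbers is the Euclidean one.  A time-dependent curve is a function
  \<open>\<alpha> :: real \<Rightarrow> real \<Rightarrow> complex\<close>, \<open>\<alpha> u t\<close>, with \<open>u \<in> [-1,1]\<close> and \<open>t \<ge> 0\<close>.\<close>

text \<open>Smoothness up to the boundary of \<open>[-1,1] \<times> [0,\<infinity>)\<close>: all partial derivatives
  (one-sided at the boundary) exist and are continuous.  D m n is the partial derivative
  of order m in u and order n in t.\<close>
definition smooth_strip :: "(real \<Rightarrow> real \<Rightarrow> complex) \<Rightarrow> bool" where
  "smooth_strip \<alpha> \<longleftrightarrow> (\<exists>D :: nat \<Rightarrow> nat \<Rightarrow> real \<Rightarrow> real \<Rightarrow> complex. D 0 0 = \<alpha> \<and>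
     (\<forall>m n. continuous_on ({-1..1} \<times> {0..}) (\<lambda>(u,t). D m n u t) \<and>
       (\<forall>u\<in>{-1..1}. \<forall>t\<in>{0..}.
          ((\<lambda>v. D m n v t) has_vector_derivative D (Suc m) n u t) (at u within {-1..1}) \<and>
          ((\<lambda>s. D m n u s) has_vector_derivative D m (Suc n) u t) (at t within {0..}))))"

definition du :: "(real \<Rightarrow> real \<Rightarrow> 'a::real_normed_vector) \<Rightarrow> real \<Rightarrow> real \<Rightarrow> 'a" where
  "du f u t = vector_derivative (\<lambda>v. f v t) (at u within {-1..1})"

definition dt :: "(real \<Rightarrow> real \<Rightarrow> 'a::real_normed_vector) \<Rightarrow> real \<Rightarrow> real \<Rightarrow> 'a" where
  "dt f u t = vector_derivative (\<lambda>s. f u s) (at t within {0..})"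

definition speed :: "(real \<Rightarrow> real \<Rightarrow> complex) \<Rightarrow> real \<Rightarrow> real \<Rightarrow> real" where
  "speed \<alpha> u t = norm (du \<alpha> u t)"

definition ds :: "(real \<Rightarrow> real \<Rightarrow> complex) \<Rightarrow> (real \<Rightarrow> real \<Rightarrow> 'a::real_normed_vector)
    \<Rightarrow> real \<Rightarrow> real \<Rightarrow> 'a" where
  "ds \<alpha> f u t = (1 / speed \<alpha> u t) *\<^sub>R du f u t"

text \<open>Unit tangent and unit normal (the tangent rotated by -90 degrees).
  The statement is invariant under the choice of sign of the normal.\<close>
definition tangent :: "(real \<Rightarrow> real \<Rightarrow> complex) \<Rightarrow> real \<Rightarrow> real \<Rightarrow> complex" where
  "tangent \<alpha> = ds \<alpha> \<alpha>"

definition normal :: "(real \<Rightarrow> real \<Rightarrow> complex) \<Rightarrow> real \<Rightarrow> real \<Rightarrow> complex" where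
  "normal \<alpha> u t = - \<i> * tangent \<alpha> u t"

definition curv :: "(real \<Rightarrow> real \<Rightarrow> complex) \<Rightarrow> real \<Rightarrow> real \<Rightarrow> real" where
  "curv \<alpha> u t = - (ds \<alpha> (ds \<alpha> \<alpha>) u t \<bullet> normal \<alpha> u t)"

definition kd :: "(real \<Rightarrow> real \<Rightarrow> complex) \<Rightarrow> nat \<Rightarrow> real \<Rightarrow> real \<Rightarrow> real" where
  "kd \<alpha> l = (ds \<alpha> ^^ l) (curv \<alpha>)"

definition lint :: "(real \<Rightarrow> real \<Rightarrow> complex) \<Rightarrow> (real \<Rightarrow> real \<Rightarrow> real) \<Rightarrow> real \<Rightarrow> real" where
  "lint \<alpha> f t = integral {-1..1} (\<lambda>u. f u t * speed \<alpha> u t)"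

definition curve_length :: "(real \<Rightarrow> real \<Rightarrow> complex) \<Rightarrow> real \<Rightarrow> real" where
  "curve_length \<alpha> t = lint \<alpha> (\<lambda>u s. 1) t"

definition kbar :: "(real \<Rightarrow> real \<Rightarrow> complex) \<Rightarrow> real \<Rightarrow> real" where
  "kbar \<alpha> t = lint \<alpha> (curv \<alpha>) t / curve_length \<alpha> t"

definition osc_sup :: "(real \<Rightarrow> real \<Rightarrow> complex) \<Rightarrow> real \<Rightarrow> real" where
  "osc_sup \<alpha> t = (SUP u\<in>{-1..1}. \<bar>curv \<alpha> u t - kbar \<alpha> t\<bar>)"

definition ray :: "real \<Rightarrow> complex set" where
  "ray \<theta> = {complex_of_real \<rho> * cis \<theta> | \<rho>. \<rho> > 0}"

definition open_cone :: "real \<Rightarrow> real \<Rightarrow> complex set" where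
  "open_cone \<theta>1 \<theta>2 = {complex_of_real \<rho> * cis \<phi> | \<rho> \<phi>. \<rho> > 0 \<and> \<theta>2 < \<phi> \<and> \<phi> < \<theta>1}"

definition elastic_cone_flow ::
  "real \<Rightarrow> real \<Rightarrow> real \<Rightarrow> (real \<Rightarrow> real \<Rightarrow> complex) \<Rightarrow> bool" where
  "elastic_cone_flow lam \<theta>1 \<theta>2 \<alpha> \<longleftrightarrow>
     smooth_strip \<alpha> \<and>
     (\<forall>u\<in>{-1..1}. \<forall>t\<in>{0..}. du \<alpha> u t \<noteq> 0) \<and>
     (\<forall>u\<in>{-1..1}. \<forall>t\<in>{0..}. dt \<alpha> u t =
        (kd \<alpha> 2 u t + curv \<alpha> u t ^ 3 / 2 - lam * curv \<alpha> u t) *\<^sub>R normal \<alpha> u t) \<and>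
     (\<forall>t\<in>{0..}.
        (\<forall>u\<in>{-1<..<1}. \<alpha> u t \<in> open_cone \<theta>1 \<theta>2) \<and>
        \<alpha> (-1) t \<in> ray \<theta>1 \<and> \<alpha> 1 t \<in> ray \<theta>2 \<and>
        tangent \<alpha> (-1) t \<bullet> cis \<theta>1 = 0 \<and> tangent \<alpha> 1 t \<bullet> cis \<theta>2 = 0 \<and>
        kd \<alpha> 1 (-1) t = 0 \<and> kd \<alpha> 1 1 t = 0)"

end

theory Submission
  imports Defs
begin

(* Differentiating under the integral sign, d/dt of the integral of k_s^2 ds is the integral over
   [-1,1] of the time derivative of k_s^2 |alpha_u|.  For a normal flow alpha_t = F nu one has
   (|alpha_u|)_t = k F |alpha_u|, d_t d_s = d_s d_t - k F d_s and k_t = -(F_ss + k^2 F); with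
   F = k_ss + k^3/2 - lam k the density becomes |alpha_u| times a polynomial in k, ..., k_{s^5}.
   Up to the u-derivative of a flux, which vanishes at both ends because k_s = 0 there and F_s = 0
   (the unit tangent stays orthogonal to a fixed ray), this polynomial is a bulk term in
   k, ..., k_sss and kbar.  The claimed right-hand side minus the bulk term is a sum of squares
   with nonnegative coefficients, as lam > 0 and |k - kbar| <= ||k - kbar||_oo. *)

section \<open>Smoothness on the strip\<close>

definition strip :: "(real \<times> real) set" where
  "strip = {-1..1} \<times> {0..}"

(* Unlike smooth_strip, C^n regularity is phrased through du and dt themselves, so that closure
   under algebraic operations goes by induction on n. *)
fun strip_C :: "nat \<Rightarrow> (real \<Rightarrow> real \<Rightarrow> 'a::real_normed_vector) \<Rightarrow> bool" where
  "strip_C 0 f \<longleftrightarrow> continuous_on strip (\<lambda>(u,t). f u t)"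
| "strip_C (Suc n) f \<longleftrightarrow> continuous_on strip (\<lambda>(u,t). f u t) \<and>
     (\<forall>u\<in>{-1..1}. \<forall>t\<in>{0..}.
        ((\<lambda>v. f v t) has_vector_derivative du f u t) (at u within {-1..1}) \<and>
        ((\<lambda>s. f u s) has_vector_derivative dt f u t) (at t within {0..})) \<and>
     strip_C n (du f) \<and> strip_C n (dt f)"

definition strip_smooth :: "(real \<Rightarrow> real \<Rightarrow> 'a::real_normed_vector) \<Rightarrow> bool" where
  "strip_smooth f \<longleftrightarrow> (\<forall>n. strip_C n f)"

lemma strip_C_continuous: "strip_C n f \<Longrightarrow> continuous_on strip (\<lambda>(u,t). f u t)"
  by (cases n) auto

lemma strip_C_SucD: "strip_C (Suc n) f \<Longrightarrow> strip_C n f"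
proof (induction n arbitrary: f)
  case (Suc n)
  then show ?case
    using Suc.IH Suc.prems by (metis strip_C.simps(2))
qed simp

lemma strip_C_Suc_derivatives:
  assumes "strip_C (Suc n) f" "u \<in> {-1..1}" "t \<ge> 0"
  shows "((\<lambda>v. f v t) has_vector_derivative du f u t) (at u within {-1..1})"
    and "((\<lambda>s. f u s) has_vector_derivative dt f u t) (at t within {0..})"
  using assms by auto

lemma strip_C_continuous_on_swap:
  assumes "strip_C n f" "S \<subseteq> {-1..1}"
  shows "continuous_on ({0..} \<times> S) (\<lambda>(s, w). f w s)"
proof -
  have "continuous_on ({0..} \<times> S) (\<lambda>y. (\<lambda>(u,t). f u t) ((\<lambda>(s,w). (w,s)) y))"
    by (rule continuous_on_compose2[OF strip_C_continuous[OF assms(1)]])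
       (use assms(2) in \<open>auto simp: strip_def split_beta intro!: continuous_intros\<close>)
  then show ?thesis by (simp add: split_beta)
qed

lemma strip_C_continuous_on_slice:
  assumes "strip_C n f" "t \<ge> 0"
  shows "continuous_on {-1..1} (\<lambda>w. f w t)"
proof -
  have "continuous_on {-1..1} (\<lambda>w. (\<lambda>(u,t). f u t) ((\<lambda>w. (w,t)) w))"
    by (rule continuous_on_compose2[OF strip_C_continuous[OF assms(1)]])
       (use assms(2) in \<open>auto simp: strip_def intro!: continuous_intros\<close>)
  then show ?thesis by simp
qed

lemma at_within_atLeast_neq_bot:
  assumes "t \<ge> (0::real)" shows "at t within {0..} \<noteq> bot"
proof -
  have "t islimpt {t..t+1}" "{t..t+1} \<subseteq> {0..}" using assms by (auto simp: islimpt_Icc)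
  then have "t islimpt {0..}" by (rule islimpt_subset)
  then show ?thesis by (simp add: trivial_limit_within)
qed

lemma at_within_interval_neq_bot: "u \<in> {-1..1::real} \<Longrightarrow> at u within {-1..1} \<noteq> bot"
  by (simp add: trivial_limit_within islimpt_Icc)

lemma du_eqI:
  assumes "u \<in> {-1..1}" "((\<lambda>v. f v t) has_vector_derivative D) (at u within {-1..1})"
  shows "du f u t = D"
  unfolding du_def by (rule vector_derivative_within[OF at_within_interval_neq_bot[OF assms(1)] assms(2)])

lemma dt_eqI:
  assumes "t \<ge> 0" "((\<lambda>s. f u s) has_vector_derivative D) (at t within {0..})"
  shows "dt f u t = D"
  unfolding dt_def by (rule vector_derivative_within[OF at_within_atLeast_neq_bot[OF assms(1)] assms(2)])

lemma du_cong:
  assumes "\<And>u t. u \<in> {-1..1} \<Longrightarrow> t \<ge> 0 \<Longrightarrow> f u t = g u t" "u \<in> {-1..1}" "t \<ge> 0"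
  shows "du f u t = du g u t"
  unfolding du_def by (rule vector_derivative_cong_eq) (use assms in \<open>auto intro!: always_eventually\<close>)

lemma dt_cong:
  assumes "\<And>u t. u \<in> {-1..1} \<Longrightarrow> t \<ge> 0 \<Longrightarrow> f u t = g u t" "u \<in> {-1..1}" "t \<ge> 0"
  shows "dt f u t = dt g u t"
  unfolding dt_def by (rule vector_derivative_cong_eq) (use assms in \<open>auto intro!: always_eventually\<close>)

lemma strip_C_cong:
  assumes "strip_C n f" "\<And>u t. u \<in> {-1..1} \<Longrightarrow> t \<ge> 0 \<Longrightarrow> f u t = g u t"
  shows "strip_C n g"
  using assms
proof (induction n arbitrary: f g)
  case 0
  have "continuous_on strip (\<lambda>(u,t). f u t) = continuous_on strip (\<lambda>(u,t). g u t)"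
    by (intro continuous_on_cong refl) (auto simp: strip_def 0(2))
  then show ?case using 0(1) by simp
next
  case (Suc n)
  have "continuous_on strip (\<lambda>(u,t). f u t) = continuous_on strip (\<lambda>(u,t). g u t)"
    by (intro continuous_on_cong refl) (auto simp: strip_def Suc.prems(2))
  then have cont: "continuous_on strip (\<lambda>(u,t). g u t)"
    using strip_C_continuous[OF Suc.prems(1)] by simp
  have derivs: "((\<lambda>v. g v t) has_vector_derivative du g u t) (at u within {-1..1}) \<and>
        ((\<lambda>s. g u s) has_vector_derivative dt g u t) (at t within {0..})"
    if ut: "u \<in> {-1..1}" "t \<in> {0..}" for u t
  proof
    have "((\<lambda>v. f v t) has_vector_derivative du f u t) (at u within {-1..1})"
      using Suc.prems(1) ut by simp
    then have "((\<lambda>v. g v t) has_vector_derivative du f u t) (at u within {-1..1})"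
      by (rule has_vector_derivative_transform[rotated 2]) (use ut Suc.prems(2) in auto)
    then show "((\<lambda>v. g v t) has_vector_derivative du g u t) (at u within {-1..1})"
      using du_cong[OF Suc.prems(2)] ut by simp
    have "((\<lambda>s. f u s) has_vector_derivative dt f u t) (at t within {0..})"
      using Suc.prems(1) ut by simp
    then have "((\<lambda>s. g u s) has_vector_derivative dt f u t) (at t within {0..})"
      by (rule has_vector_derivative_transform[rotated 2]) (use ut Suc.prems(2) in auto)
    then show "((\<lambda>s. g u s) has_vector_derivative dt g u t) (at t within {0..})"
      using dt_cong[OF Suc.prems(2)] ut by simp
  qed
  have "strip_C n (du g)"
    using Suc.IH[of "du f" "du g"] Suc.prems du_cong[OF Suc.prems(2)] by simp
  moreover have "strip_C n (dt g)"
    using Suc.IH[of "dt f" "dt g"] Suc.prems dt_cong[OF Suc.prems(2)] by simp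
  ultimately show ?case unfolding strip_C.simps(2) using cont derivs by blast
qed

lemma strip_C_SucI:
  assumes "continuous_on strip (\<lambda>(u,t). h u t)"
    and "\<And>u t. u \<in> {-1..1} \<Longrightarrow> t \<ge> 0 \<Longrightarrow> ((\<lambda>v. h v t) has_vector_derivative A u t) (at u within {-1..1})"
    and "\<And>u t. u \<in> {-1..1} \<Longrightarrow> t \<ge> 0 \<Longrightarrow> ((\<lambda>s. h u s) has_vector_derivative B u t) (at t within {0..})"
    and "strip_C n A" "strip_C n B"
  shows "strip_C (Suc n) h"
proof -
  have du_h: "du h u t = A u t" if "u \<in> {-1..1}" "t \<ge> 0" for u t
    using du_eqI assms(2) that by blast
  have dt_h: "dt h u t = B u t" if "u \<in> {-1..1}" "t \<ge> 0" for u t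
    using dt_eqI assms(3) that by blast
  have "strip_C n (du h)" "strip_C n (dt h)"
    using strip_C_cong[OF assms(4), of "du h"] strip_C_cong[OF assms(5), of "dt h"] du_h dt_h by simp_all
  then show ?thesis using assms(1-3) du_h dt_h by simp
qed

lemma strip_C_const: "strip_C n (\<lambda>u t. c)"
proof (induction n arbitrary: c)
  case (Suc n)
  show ?case
    by (rule strip_C_SucI[where A="\<lambda>u t. 0" and B="\<lambda>u t. 0"])
       (auto simp: Suc.IH intro: has_vector_derivative_const)
qed simp

lemma strip_C_add:
  assumes "strip_C n f" "strip_C n g" shows "strip_C n (\<lambda>u t. f u t + g u t)"
  using assms
proof (induction n arbitrary: f g)
  case 0
  then show ?case using continuous_on_add by (fastforce simp: split_beta)
next
  case (Suc n)
  show ?case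
  proof (rule strip_C_SucI)
    show "continuous_on strip (\<lambda>(u,t). f u t + g u t)"
      using continuous_on_add[OF strip_C_continuous[OF Suc.prems(1)] strip_C_continuous[OF Suc.prems(2)]]
      by (simp add: split_beta)
  next
    fix u t :: real assume "u \<in> {-1..1}" "t \<ge> 0"
    then show "((\<lambda>v. f v t + g v t) has_vector_derivative du f u t + du g u t) (at u within {-1..1})"
      "((\<lambda>s. f u s + g u s) has_vector_derivative dt f u t + dt g u t) (at t within {0..})"
      using Suc.prems by (auto intro: has_vector_derivative_add)
  qed (use Suc in auto)
qed

lemma strip_C_linear:
  assumes "bounded_linear L" "strip_C n f" shows "strip_C n (\<lambda>u t. L (f u t))"
  using assms(2)
proof (induction n arbitrary: f)
  case 0
  then show ?case using bounded_linear.continuous_on[OF assms(1)] by (fastforce simp: split_beta)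
next
  case (Suc n)
  show ?case
  proof (rule strip_C_SucI)
    show "continuous_on strip (\<lambda>(u,t). L (f u t))"
      using bounded_linear.continuous_on[OF assms(1) strip_C_continuous[OF Suc.prems]]
      by (simp add: split_beta)
  next
    fix u t :: real assume "u \<in> {-1..1}" "t \<ge> 0"
    then show "((\<lambda>v. L (f v t)) has_vector_derivative L (du f u t)) (at u within {-1..1})"
      "((\<lambda>s. L (f u s)) has_vector_derivative L (dt f u t)) (at t within {0..})"
      using Suc.prems bounded_linear.has_vector_derivative[OF assms(1)] by auto
  qed (use Suc in auto)
qed

lemma strip_C_bilinear:
  fixes prod :: "'a::real_normed_vector \<Rightarrow> 'b::real_normed_vector \<Rightarrow> 'c::real_normed_vector"
  assumes "bounded_bilinear prod" "strip_C n f" "strip_C n g"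
  shows "strip_C n (\<lambda>u t. prod (f u t) (g u t))"
  using assms(2,3)
proof (induction n arbitrary: f g)
  case 0
  then show ?case using bounded_bilinear.continuous_on[OF assms(1)] by (fastforce simp: split_beta)
next
  case (Suc n)
  show ?case
  proof (rule strip_C_SucI)
    show "continuous_on strip (\<lambda>(u,t). prod (f u t) (g u t))"
      using bounded_bilinear.continuous_on[OF assms(1) strip_C_continuous[OF Suc.prems(1)]
          strip_C_continuous[OF Suc.prems(2)]]
      by (simp add: split_beta)
  next
    fix u t :: real assume ut: "u \<in> {-1..1}" "t \<ge> 0"
    show "((\<lambda>v. prod (f v t) (g v t)) has_vector_derivative
          prod (f u t) (du g u t) + prod (du f u t) (g u t)) (at u within {-1..1})"
      "((\<lambda>s. prod (f u s) (g u s)) has_vector_derivative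
          prod (f u t) (dt g u t) + prod (dt f u t) (g u t)) (at t within {0..})"
      by (rule bounded_bilinear.has_vector_derivative[OF assms(1)
            strip_C_Suc_derivatives(1)[OF Suc.prems(1) ut] strip_C_Suc_derivatives(1)[OF Suc.prems(2) ut]],
          rule bounded_bilinear.has_vector_derivative[OF assms(1)
            strip_C_Suc_derivatives(2)[OF Suc.prems(1) ut] strip_C_Suc_derivatives(2)[OF Suc.prems(2) ut]])
  next
    have "strip_C n f" "strip_C n g" using Suc.prems strip_C_SucD by blast+
    then show "strip_C n (\<lambda>u t. prod (f u t) (du g u t) + prod (du f u t) (g u t))"
      "strip_C n (\<lambda>u t. prod (f u t) (dt g u t) + prod (dt f u t) (g u t))"
      using Suc by (auto intro!: strip_C_add)
  qed
qed

lemma strip_C_mult: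
  "strip_C n f \<Longrightarrow> strip_C n g \<Longrightarrow> strip_C n (\<lambda>u t. f u t * (g u t :: 'a::real_normed_algebra))"
  by (rule strip_C_bilinear[OF bounded_bilinear_mult])

lemma strip_C_minus: "strip_C n f \<Longrightarrow> strip_C n (\<lambda>u t. - f u t)"
  using strip_C_linear[OF bounded_linear_minus[OF bounded_linear_ident], of n f] by simp

lemma strip_C_inverse:
  fixes f :: "real \<Rightarrow> real \<Rightarrow> real"
  assumes "strip_C n f" and nonzero: "\<And>u t. u \<in> {-1..1} \<Longrightarrow> t \<ge> 0 \<Longrightarrow> f u t \<noteq> 0"
  shows "strip_C n (\<lambda>u t. inverse (f u t))"
proof -
  have cont: "continuous_on strip (\<lambda>(u,t). inverse (f u t))" if "strip_C m f" for m
    using continuous_on_inverse[OF strip_C_continuous[OF that]] nonzero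
    by (auto simp: strip_def split_beta)
  show ?thesis
    using assms(1)
  proof (induction n)
    case 0
    show ?case using cont[OF 0] by simp
  next
    case (Suc n)
    show ?case
    proof (rule strip_C_SucI[OF cont[OF Suc.prems]])
      fix u t :: real assume ut: "u \<in> {-1..1}" "t \<ge> 0"
      have "((\<lambda>v. f v t) has_real_derivative du f u t) (at u within {-1..1})"
        "((\<lambda>s. f u s) has_real_derivative dt f u t) (at t within {0..})"
        using strip_C_Suc_derivatives[OF Suc.prems ut]
        by (simp_all add: has_real_derivative_iff_has_vector_derivative)
      from this[THEN DERIV_inverse_fun, OF nonzero[OF ut]]
      show "((\<lambda>v. inverse (f v t)) has_vector_derivative - (du f u t * (inverse (f u t) * inverse (f u t))))
          (at u within {-1..1})"
        "((\<lambda>s. inverse (f u s)) has_vector_derivative - (dt f u t * (inverse (f u t) * inverse (f u t))))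
          (at t within {0..})"
        by (simp_all add: has_real_derivative_iff_has_vector_derivative[symmetric] power2_eq_square)
    next
      have "strip_C n (\<lambda>u t. inverse (f u t))" using Suc strip_C_SucD by blast
      then show "strip_C n (\<lambda>u t. - (du f u t * (inverse (f u t) * inverse (f u t))))"
        "strip_C n (\<lambda>u t. - (dt f u t * (inverse (f u t) * inverse (f u t))))"
        using Suc.prems by (auto intro!: strip_C_minus strip_C_mult)
    qed
  qed
qed

lemma strip_C_sqrt:
  fixes f :: "real \<Rightarrow> real \<Rightarrow> real"
  assumes "strip_C n f" and pos: "\<And>u t. u \<in> {-1..1} \<Longrightarrow> t \<ge> 0 \<Longrightarrow> f u t > 0"
  shows "strip_C n (\<lambda>u t. sqrt (f u t))"
proof -
  have cont: "continuous_on strip (\<lambda>(u,t). sqrt (f u t))" if "strip_C m f" for m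
    using continuous_on_real_sqrt[OF strip_C_continuous[OF that]] by (simp add: split_beta)
  show ?thesis
    using assms(1)
  proof (induction n)
    case 0
    show ?case using cont[OF 0] by simp
  next
    case (Suc n)
    show ?case
    proof (rule strip_C_SucI[OF cont[OF Suc.prems]])
      fix u t :: real assume ut: "u \<in> {-1..1}" "t \<ge> 0"
      have "((\<lambda>v. f v t) has_real_derivative du f u t) (at u within {-1..1})"
        "((\<lambda>s. f u s) has_real_derivative dt f u t) (at t within {0..})"
        using strip_C_Suc_derivatives[OF Suc.prems ut]
        by (simp_all add: has_real_derivative_iff_has_vector_derivative)
      from DERIV_chain2[OF DERIV_real_sqrt[OF pos[OF ut]] this(1)]
        DERIV_chain2[OF DERIV_real_sqrt[OF pos[OF ut]] this(2)]
      show "((\<lambda>v. sqrt (f v t)) has_vector_derivative inverse (sqrt (f u t)) / 2 * du f u t)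
          (at u within {-1..1})"
        "((\<lambda>s. sqrt (f u s)) has_vector_derivative inverse (sqrt (f u t)) / 2 * dt f u t)
          (at t within {0..})"
        by (simp_all add: has_real_derivative_iff_has_vector_derivative[symmetric])
    next
      have "strip_C n (\<lambda>u t. sqrt (f u t))"
        using Suc.IH strip_C_SucD[OF Suc.prems] by blast
      then have "strip_C n (\<lambda>u t. inverse (sqrt (f u t)))"
        by (rule strip_C_inverse) (use pos in force)
      from strip_C_mult[OF this strip_C_const, of "1/2"]
      have half: "strip_C n (\<lambda>u t. inverse (sqrt (f u t)) / 2)" by simp
      have "strip_C n (du f)" "strip_C n (dt f)" using Suc.prems by simp_all
      then show "strip_C n (\<lambda>u t. inverse (sqrt (f u t)) / 2 * du f u t)"
        "strip_C n (\<lambda>u t. inverse (sqrt (f u t)) / 2 * dt f u t)"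
        by (simp_all only: strip_C_mult[OF half])
    qed
  qed
qed

(* Schwarz: the integrals over [-1, x] of dt (du f) (by differentiation under the integral sign)
   and of du (dt f) (by the fundamental theorem) both equal dt f x - dt f (-1). *)

lemma integral_dt_du:
  fixes f :: "real \<Rightarrow> real \<Rightarrow> 'a::euclidean_space"
  assumes f: "strip_C 2 f" and x: "x \<in> {-1..1}" and t: "t \<ge> 0"
  shows "integral {-1..x} (\<lambda>w. dt (du f) w t) = dt f x t - dt f (-1) t"
proof -
  have f1: "strip_C 1 f" "strip_C 1 (du f)" using f strip_C_SucD by (auto simp: numeral_2_eq_2)
  have sub: "{-1..x} \<subseteq> {-1..1}" using x by auto
  have ftc: "f x s - f (-1) s = integral {-1..x} (\<lambda>w. du f w s)" if s: "s \<ge> 0" for s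
  proof -
    have "((\<lambda>w. du f w s) has_integral f x s - f (-1) s) {-1..x}"
    proof (rule fundamental_theorem_of_calculus)
      fix w assume "w \<in> {-1..x}"
      then show "((\<lambda>w. f w s) has_vector_derivative du f w s) (at w within {-1..x})"
        using strip_C_Suc_derivatives(1)[OF f1(1)[unfolded One_nat_def] _ s] sub
        by (blast intro: has_vector_derivative_within_subset)
    qed (use x in auto)
    then show ?thesis by (simp add: integral_unique)
  qed
  have "((\<lambda>s. integral (cbox (-1) x) (\<lambda>w. du f w s)) has_vector_derivative
          integral (cbox (-1) x) (\<lambda>w. dt (du f) w t)) (at t within {0..})"
  proof (rule leibniz_rule_vector_derivative)
    fix s w :: real assume "s \<in> {0..}" "w \<in> cbox (-1) x"
    then show "((\<lambda>s. du f w s) has_vector_derivative dt (du f) w s) (at s within {0..})"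
      using strip_C_Suc_derivatives(2)[OF f1(2)[unfolded One_nat_def]] sub by auto
  next
    fix s :: real assume "s \<in> {0..}"
    then have "continuous_on {-1..x} (\<lambda>w. du f w s)"
      using strip_C_continuous_on_slice[OF f1(2)] continuous_on_subset[OF _ sub] by auto
    then show "(\<lambda>w. du f w s) integrable_on cbox (-1) x"
      by (simp add: integrable_continuous_interval)
  next
    show "continuous_on ({0..} \<times> cbox (-1) x) (\<lambda>(s, w). dt (du f) w s)"
      using f sub by (intro strip_C_continuous_on_swap[of 0]) (auto simp: numeral_2_eq_2)
  qed (use t in auto)
  then have "((\<lambda>s. f x s - f (-1) s) has_vector_derivative integral {-1..x} (\<lambda>w. dt (du f) w t))
      (at t within {0..})"
    unfolding box_real(2) by (rule has_vector_derivative_transform[rotated 2]) (use t ftc in auto)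
  moreover have "((\<lambda>s. f x s - f (-1) s) has_vector_derivative dt f x t - dt f (-1) t) (at t within {0..})"
    using strip_C_Suc_derivatives(2)[OF f1(1)[unfolded One_nat_def] _ t] x
    by (auto intro!: has_vector_derivative_diff)
  ultimately show ?thesis
    using vector_derivative_unique_within[OF at_within_atLeast_neq_bot[OF t]] by blast
qed

lemma integral_du_dt:
  fixes f :: "real \<Rightarrow> real \<Rightarrow> 'a::euclidean_space"
  assumes f: "strip_C 2 f" and x: "x \<in> {-1..1}" and t: "t \<ge> 0"
  shows "integral {-1..x} (\<lambda>w. du (dt f) w t) = dt f x t - dt f (-1) t"
proof -
  have f1: "strip_C (Suc 0) (dt f)" using f by (simp add: numeral_2_eq_2)
  have sub: "{-1..x} \<subseteq> {-1..1}" using x by auto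
  have "((\<lambda>w. du (dt f) w t) has_integral dt f x t - dt f (-1) t) {-1..x}"
  proof (rule fundamental_theorem_of_calculus)
    fix w assume "w \<in> {-1..x}"
    then have "w \<in> {-1..1}" using sub by auto
    then show "((\<lambda>w. dt f w t) has_vector_derivative du (dt f) w t) (at w within {-1..x})"
      using has_vector_derivative_within_subset[OF strip_C_Suc_derivatives(1)[OF f1 _ t] sub] by blast
  qed (use x in auto)
  then show ?thesis by (simp add: integral_unique)
qed

lemma continuous_on_eq_0_if_integrals_eq_0:
  fixes p :: "real \<Rightarrow> 'a::banach"
  assumes "continuous_on {a..b} p" "\<And>x. x \<in> {a..b} \<Longrightarrow> integral {a..x} p = 0"
    and "a < b" "y \<in> {a..b}"
  shows "p y = 0"
proof -
  have "((\<lambda>x. integral {a..x} p) has_vector_derivative p y) (at y within {a..b})"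
    by (rule integral_has_vector_derivative[OF assms(1,4)])
  moreover have "((\<lambda>x. integral {a..x} p) has_vector_derivative 0) (at y within {a..b})"
    by (rule has_vector_derivative_transform[OF assms(4) assms(2) has_vector_derivative_const])
  moreover have "at y within {a..b} \<noteq> bot"
    using assms(3,4) by (simp add: trivial_limit_within islimpt_Icc)
  ultimately show ?thesis using vector_derivative_unique_within by blast
qed

lemma dt_du_commute:
  fixes f :: "real \<Rightarrow> real \<Rightarrow> 'a::euclidean_space"
  assumes f: "strip_C 2 f" and u: "u \<in> {-1..1}" and t: "t \<ge> 0"
  shows "dt (du f) u t = du (dt f) u t"
proof -
  have "strip_C 0 (dt (du f))" "strip_C 0 (du (dt f))"
    using f by (auto simp: numeral_2_eq_2)
  then have cont: "continuous_on {-1..1} (\<lambda>w. dt (du f) w t - du (dt f) w t)"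
    using strip_C_continuous_on_slice t by (intro continuous_on_diff) blast+
  have "integral {-1..x} (\<lambda>w. dt (du f) w t - du (dt f) w t) = 0" if x: "x \<in> {-1..1}" for x
  proof -
    have "{-1..x} \<subseteq> {-1..1}" using x by auto
    then have "(\<lambda>w. dt (du f) w t) integrable_on {-1..x}" "(\<lambda>w. du (dt f) w t) integrable_on {-1..x}"
      using cont continuous_on_subset strip_C_continuous_on_slice \<open>strip_C 0 (dt (du f))\<close>
        \<open>strip_C 0 (du (dt f))\<close> t by (blast intro: integrable_continuous_interval)+
    then show ?thesis
      using integral_dt_du[OF f x t] integral_du_dt[OF f x t] by (simp add: integral_diff)
  qed
  then show ?thesis using continuous_on_eq_0_if_integrals_eq_0[OF cont _ _ u] by simp
qed

lemma strip_smooth_strip_C: "strip_smooth f \<Longrightarrow> strip_C n f"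
  by (simp add: strip_smooth_def)

lemma strip_smooth_const: "strip_smooth (\<lambda>u t. c)"
  by (simp add: strip_smooth_def strip_C_const)

lemma strip_smooth_add: "strip_smooth f \<Longrightarrow> strip_smooth g \<Longrightarrow> strip_smooth (\<lambda>u t. f u t + g u t)"
  by (simp add: strip_smooth_def strip_C_add)

lemma strip_smooth_minus: "strip_smooth f \<Longrightarrow> strip_smooth (\<lambda>u t. - f u t)"
  by (simp add: strip_smooth_def strip_C_minus)

lemma strip_smooth_diff: "strip_smooth f \<Longrightarrow> strip_smooth g \<Longrightarrow> strip_smooth (\<lambda>u t. f u t - g u t)"
  using strip_smooth_add[OF _ strip_smooth_minus, of f g] by simp

lemma strip_smooth_bilinear:
  fixes prod :: "'a::real_normed_vector \<Rightarrow> 'b::real_normed_vector \<Rightarrow> 'c::real_normed_vector"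
  shows "bounded_bilinear prod \<Longrightarrow> strip_smooth f \<Longrightarrow> strip_smooth g \<Longrightarrow>
    strip_smooth (\<lambda>u t. prod (f u t) (g u t))"
  by (simp add: strip_smooth_def strip_C_bilinear)

lemma strip_smooth_mult:
  "strip_smooth f \<Longrightarrow> strip_smooth g \<Longrightarrow> strip_smooth (\<lambda>u t. f u t * (g u t :: 'a::real_normed_algebra))"
  by (rule strip_smooth_bilinear[OF bounded_bilinear_mult])

lemma strip_smooth_scaleR: "strip_smooth f \<Longrightarrow> strip_smooth g \<Longrightarrow> strip_smooth (\<lambda>u t. f u t *\<^sub>R g u t)"
  by (rule strip_smooth_bilinear[OF bounded_bilinear_scaleR])

lemma strip_smooth_inner: "strip_smooth f \<Longrightarrow> strip_smooth g \<Longrightarrow> strip_smooth (\<lambda>u t. f u t \<bullet> g u t)"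
  by (rule strip_smooth_bilinear[OF bounded_bilinear_inner])

lemma strip_smooth_power:
  "strip_smooth f \<Longrightarrow> strip_smooth (\<lambda>u t. (f u t :: 'a::real_normed_algebra_1) ^ n)"
  by (induction n) (simp_all add: strip_smooth_const strip_smooth_mult)

lemma strip_smooth_divide_const: "strip_smooth f \<Longrightarrow> strip_smooth (\<lambda>u t. (f u t :: real) / c)"
  using strip_smooth_mult[OF _ strip_smooth_const, of f "inverse c"] by (simp add: divide_inverse)

lemma strip_smooth_inverse:
  "strip_smooth f \<Longrightarrow> (\<And>u t. u \<in> {-1..1} \<Longrightarrow> t \<ge> 0 \<Longrightarrow> f u t \<noteq> (0::real)) \<Longrightarrow>
    strip_smooth (\<lambda>u t. inverse (f u t))"
  unfolding strip_smooth_def using strip_C_inverse by blast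

lemma strip_smooth_sqrt:
  "strip_smooth f \<Longrightarrow> (\<And>u t. u \<in> {-1..1} \<Longrightarrow> t \<ge> 0 \<Longrightarrow> f u t > (0::real)) \<Longrightarrow>
    strip_smooth (\<lambda>u t. sqrt (f u t))"
  unfolding strip_smooth_def using strip_C_sqrt by blast

lemma strip_smooth_du: "strip_smooth f \<Longrightarrow> strip_smooth (du f)"
  unfolding strip_smooth_def by (metis strip_C.simps(2))

lemma strip_smooth_dt: "strip_smooth f \<Longrightarrow> strip_smooth (dt f)"
  unfolding strip_smooth_def by (metis strip_C.simps(2))

lemma strip_smooth_derivatives:
  assumes "strip_smooth f" "u \<in> {-1..1}" "t \<ge> 0"
  shows "((\<lambda>v. f v t) has_vector_derivative du f u t) (at u within {-1..1})"
    and "((\<lambda>s. f u s) has_vector_derivative dt f u t) (at t within {0..})"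
  using strip_C_Suc_derivatives[OF strip_smooth_strip_C[OF assms(1), of "Suc 0"] assms(2,3)] by auto

lemma strip_smooth_real_derivatives:
  fixes f :: "real \<Rightarrow> real \<Rightarrow> real"
  assumes "strip_smooth f" "u \<in> {-1..1}" "t \<ge> 0"
  shows "((\<lambda>v. f v t) has_real_derivative du f u t) (at u within {-1..1})"
    and "((\<lambda>s. f u s) has_real_derivative dt f u t) (at t within {0..})"
  using strip_smooth_derivatives[OF assms] by (simp_all add: has_real_derivative_iff_has_vector_derivative)

lemma strip_smooth_dt_du_commute:
  fixes f :: "real \<Rightarrow> real \<Rightarrow> 'a::euclidean_space"
  shows "strip_smooth f \<Longrightarrow> u \<in> {-1..1} \<Longrightarrow> t \<ge> 0 \<Longrightarrow> dt (du f) u t = du (dt f) u t"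
  using dt_du_commute strip_smooth_strip_C by blast

lemma smooth_strip_imp_strip_smooth:
  assumes "smooth_strip \<alpha>" shows "strip_smooth \<alpha>"
proof -
  obtain D where "D 0 0 = \<alpha>"
    and cont: "\<And>m n. continuous_on strip (\<lambda>(u,t). D m n u t)"
    and du_D: "\<And>m n u t. u \<in> {-1..1} \<Longrightarrow> t \<ge> 0 \<Longrightarrow>
      ((\<lambda>v. D m n v t) has_vector_derivative D (Suc m) n u t) (at u within {-1..1})"
    and dt_D: "\<And>m n u t. u \<in> {-1..1} \<Longrightarrow> t \<ge> 0 \<Longrightarrow>
      ((\<lambda>s. D m n u s) has_vector_derivative D m (Suc n) u t) (at t within {0..})"
    using assms unfolding smooth_strip_def strip_def by auto
  have "strip_C N (D m n)" for N m n
  proof (induction N arbitrary: m n)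
    case 0 then show ?case using cont by simp
  next
    case (Suc N)
    show ?case by (rule strip_C_SucI[OF cont du_D dt_D Suc.IH Suc.IH])
  qed
  then show ?thesis using \<open>D 0 0 = \<alpha>\<close> unfolding strip_smooth_def by blast
qed

lemma du_bilinear:
  fixes prod :: "'a::real_normed_vector \<Rightarrow> 'b::real_normed_vector \<Rightarrow> 'c::real_normed_vector"
  assumes "bounded_bilinear prod" "strip_smooth f" "strip_smooth g" "u \<in> {-1..1}" "t \<ge> 0"
  shows "du (\<lambda>u t. prod (f u t) (g u t)) u t = prod (f u t) (du g u t) + prod (du f u t) (g u t)"
  by (rule du_eqI[where f="\<lambda>u t. prod (f u t) (g u t)", OF assms(4) bounded_bilinear.has_vector_derivative[OF assms(1)
        strip_smooth_derivatives(1)[OF assms(2,4,5)] strip_smooth_derivatives(1)[OF assms(3,4,5)]]])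

lemma dt_bilinear:
  fixes prod :: "'a::real_normed_vector \<Rightarrow> 'b::real_normed_vector \<Rightarrow> 'c::real_normed_vector"
  assumes "bounded_bilinear prod" "strip_smooth f" "strip_smooth g" "u \<in> {-1..1}" "t \<ge> 0"
  shows "dt (\<lambda>u t. prod (f u t) (g u t)) u t = prod (f u t) (dt g u t) + prod (dt f u t) (g u t)"
  by (rule dt_eqI[where f="\<lambda>u t. prod (f u t) (g u t)", OF assms(5) bounded_bilinear.has_vector_derivative[OF assms(1)
        strip_smooth_derivatives(2)[OF assms(2,4,5)] strip_smooth_derivatives(2)[OF assms(3,4,5)]]])

lemma dt_minus: "strip_smooth f \<Longrightarrow> u \<in> {-1..1} \<Longrightarrow> t \<ge> 0 \<Longrightarrow> dt (\<lambda>u t. - f u t) u t = - dt f u t"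
  by (intro dt_eqI has_vector_derivative_minus strip_smooth_derivatives(2))

lemma du_const: "u \<in> {-1..1} \<Longrightarrow> du (\<lambda>u t. c) u t = 0"
  by (rule du_eqI) (auto intro: has_vector_derivative_const)

lemma dt_const: "t \<ge> 0 \<Longrightarrow> dt (\<lambda>u t. c) u t = 0"
  by (rule dt_eqI) (auto intro: has_vector_derivative_const)

lemma ds_bilinear:
  fixes prod :: "'a::real_normed_vector \<Rightarrow> 'b::real_normed_vector \<Rightarrow> 'c::real_normed_vector"
  assumes "bounded_bilinear prod" "strip_smooth f" "strip_smooth g" "u \<in> {-1..1}" "t \<ge> 0"
  shows "ds \<alpha> (\<lambda>u t. prod (f u t) (g u t)) u t = prod (f u t) (ds \<alpha> g u t) + prod (ds \<alpha> f u t) (g u t)"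
  by (simp add: ds_def du_bilinear[OF assms] scaleR_add_right
      bounded_bilinear.scaleR_right[OF assms(1)] bounded_bilinear.scaleR_left[OF assms(1)])

lemma ds_cong:
  assumes "\<And>u t. u \<in> {-1..1} \<Longrightarrow> t \<ge> 0 \<Longrightarrow> f u t = g u t" "u \<in> {-1..1}" "t \<ge> 0"
  shows "ds \<alpha> f u t = ds \<alpha> g u t"
  using du_cong[OF assms] by (simp add: ds_def)

lemma ds_eq_inverse_speed: "ds \<alpha> f = (\<lambda>u t. inverse (speed \<alpha> u t) *\<^sub>R du f u t)"
  by (auto simp: ds_def fun_eq_iff inverse_eq_divide)

lemma has_real_derivative_integral_strip:
  fixes g :: "real \<Rightarrow> real \<Rightarrow> real"
  assumes g: "strip_smooth g" and t: "t \<ge> 0"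
  shows "((\<lambda>s. integral {-1..1} (\<lambda>u. g u s)) has_real_derivative integral {-1..1} (\<lambda>u. dt g u t))
    (at t within {0..})"
proof -
  have "((\<lambda>s. integral (cbox (-1) 1) (\<lambda>u. g u s)) has_vector_derivative
      integral (cbox (-1) 1) (\<lambda>u. dt g u t)) (at t within {0..})"
  proof (rule leibniz_rule_vector_derivative)
    fix s w :: real assume "s \<in> {0..}" "w \<in> cbox (-1) 1"
    then show "((\<lambda>s. g w s) has_vector_derivative dt g w s) (at s within {0..})"
      using strip_smooth_derivatives(2)[OF g] by auto
  next
    fix s :: real assume "s \<in> {0..}"
    then show "(\<lambda>w. g w s) integrable_on cbox (-1) 1"
      using strip_C_continuous_on_slice[OF strip_smooth_strip_C[OF g]]
      by (simp add: integrable_continuous_interval)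
  next
    show "continuous_on ({0..} \<times> cbox (-1) 1) (\<lambda>(s, w). dt g w s)"
      by (rule strip_C_continuous_on_swap[OF strip_smooth_strip_C[OF strip_smooth_dt[OF g]]]) auto
  qed (use t in auto)
  then show ?thesis by (simp add: has_real_derivative_iff_has_vector_derivative)
qed

section \<open>Frenet frame of a regular curve\<close>

lemma kd_0: "kd \<alpha> 0 = curv \<alpha>"
  by (simp add: kd_def)

lemma kd_Suc: "kd \<alpha> (Suc j) = ds \<alpha> (kd \<alpha> j)"
  by (simp add: kd_def)

lemma normal_eq: "normal \<alpha> = (\<lambda>u t. - \<i> * tangent \<alpha> u t)"
  by (auto simp: fun_eq_iff normal_def)

lemma curv_eq: "curv \<alpha> = (\<lambda>u t. - (ds \<alpha> (tangent \<alpha>) u t \<bullet> normal \<alpha> u t))"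
  by (auto simp: fun_eq_iff curv_def tangent_def)

lemma inner_normal_tangent: "normal \<alpha> u t \<bullet> tangent \<alpha> u t = 0" "tangent \<alpha> u t \<bullet> normal \<alpha> u t = 0"
  by (simp_all add: normal_def inner_complex_def)

lemma inner_normal_self: "normal \<alpha> u t \<bullet> normal \<alpha> u t = tangent \<alpha> u t \<bullet> tangent \<alpha> u t"
  by (simp add: normal_def inner_complex_def)

lemma complex_orthonormal_decomp:
  fixes T z :: complex
  assumes "T \<bullet> T = 1"
  shows "z = (z \<bullet> T) *\<^sub>R T + (z \<bullet> (- \<i> * T)) *\<^sub>R (- \<i> * T)"
proof -
  have h: "Re T * Re T + Im T * Im T = 1" using assms by (simp add: inner_complex_def)
  have "Re z = (Re z * Re T + Im z * Im T) * Re T + (Re z * Im T - Im z * Re T) * Im T"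
    "Im z = (Re z * Re T + Im z * Im T) * Im T - (Re z * Im T - Im z * Re T) * Re T"
    using h by algebra+
  then show ?thesis by (simp add: complex_eq_iff inner_complex_def)
qed

locale regular_strip_curve =
  fixes \<alpha> :: "real \<Rightarrow> real \<Rightarrow> complex"
  assumes smooth: "strip_smooth \<alpha>"
    and regular: "\<And>u t. u \<in> {-1..1} \<Longrightarrow> t \<ge> 0 \<Longrightarrow> du \<alpha> u t \<noteq> 0"
begin

lemma speed_pos: "u \<in> {-1..1} \<Longrightarrow> t \<ge> 0 \<Longrightarrow> speed \<alpha> u t > 0"
  by (simp add: speed_def regular)

lemma strip_smooth_speed: "strip_smooth (speed \<alpha>)"
proof -
  have "speed \<alpha> = (\<lambda>u t. sqrt (du \<alpha> u t \<bullet> du \<alpha> u t))"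
    by (auto simp: speed_def norm_eq_sqrt_inner fun_eq_iff)
  then show ?thesis
    using strip_smooth_sqrt[OF strip_smooth_inner[OF strip_smooth_du[OF smooth] strip_smooth_du[OF smooth]]]
    by (simp add: regular)
qed

lemma strip_smooth_inverse_speed: "strip_smooth (\<lambda>u t. inverse (speed \<alpha> u t))"
  by (rule strip_smooth_inverse[OF strip_smooth_speed]) (use speed_pos in force)

lemma strip_smooth_ds: "strip_smooth f \<Longrightarrow> strip_smooth (ds \<alpha> f)"
  unfolding ds_eq_inverse_speed by (rule strip_smooth_scaleR[OF strip_smooth_inverse_speed strip_smooth_du])

lemma strip_smooth_tangent: "strip_smooth (tangent \<alpha>)"
  unfolding tangent_def by (rule strip_smooth_ds[OF smooth])

lemma strip_smooth_normal: "strip_smooth (normal \<alpha>)"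
  unfolding normal_eq by (rule strip_smooth_mult[OF strip_smooth_const strip_smooth_tangent])

lemma strip_smooth_curv: "strip_smooth (curv \<alpha>)"
  unfolding curv_eq
  by (rule strip_smooth_minus[OF strip_smooth_inner[OF strip_smooth_ds[OF strip_smooth_tangent] strip_smooth_normal]])

lemma strip_smooth_kd: "strip_smooth (kd \<alpha> j)"
  by (induction j) (simp_all add: kd_0 kd_Suc strip_smooth_curv strip_smooth_ds)

lemma du_eq_speed_ds: "u \<in> {-1..1} \<Longrightarrow> t \<ge> 0 \<Longrightarrow> du f u t = speed \<alpha> u t *\<^sub>R ds \<alpha> f u t"
  using speed_pos[of u t] by (simp add: ds_def)

lemma du_curve: "u \<in> {-1..1} \<Longrightarrow> t \<ge> 0 \<Longrightarrow> du \<alpha> u t = speed \<alpha> u t *\<^sub>R tangent \<alpha> u t"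
  by (simp add: du_eq_speed_ds tangent_def)

lemma ds_eqI:
  assumes "u \<in> {-1..1}" "t \<ge> 0"
    and "((\<lambda>w. f w t) has_real_derivative speed \<alpha> u t * D) (at u within {-1..1})"
  shows "ds \<alpha> f u t = D"
proof -
  have "du f u t = speed \<alpha> u t * D"
    using assms by (intro du_eqI) (simp_all add: has_real_derivative_iff_has_vector_derivative)
  then show ?thesis using speed_pos[OF assms(1,2)] by (simp add: ds_def)
qed

lemma has_real_derivative_ds:
  assumes "strip_smooth f" "u \<in> {-1..1}" "t \<ge> 0"
  shows "((\<lambda>w. f w t) has_real_derivative speed \<alpha> u t * ds \<alpha> f u t) (at u within {-1..1})"
  using strip_smooth_real_derivatives(1)[OF assms] du_eq_speed_ds[OF assms(2,3), of f] by simp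

lemma has_real_derivative_kd:
  assumes "u \<in> {-1..1}" "t \<ge> 0"
  shows "((\<lambda>w. kd \<alpha> j w t) has_real_derivative speed \<alpha> u t * kd \<alpha> (Suc j) u t) (at u within {-1..1})"
  using has_real_derivative_ds[OF strip_smooth_kd assms] by (simp add: kd_Suc)

lemma inner_tangent_self: "u \<in> {-1..1} \<Longrightarrow> t \<ge> 0 \<Longrightarrow> tangent \<alpha> u t \<bullet> tangent \<alpha> u t = 1"
  using regular[of u t] by (simp add: tangent_def ds_def speed_def dot_square_norm power2_eq_square)

lemma inner_ds_tangent_tangent:
  assumes ut: "u \<in> {-1..1}" "t \<ge> 0"
  shows "ds \<alpha> (tangent \<alpha>) u t \<bullet> tangent \<alpha> u t = 0"
proof -
  have "du (\<lambda>u t. tangent \<alpha> u t \<bullet> tangent \<alpha> u t) u t = du (\<lambda>u t. 1::real) u t"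
    by (rule du_cong[OF _ ut]) (simp add: inner_tangent_self)
  then have "tangent \<alpha> u t \<bullet> du (tangent \<alpha>) u t + du (tangent \<alpha>) u t \<bullet> tangent \<alpha> u t = 0"
    using du_bilinear[OF bounded_bilinear_inner strip_smooth_tangent strip_smooth_tangent ut] du_const ut
    by simp
  then show ?thesis by (simp add: ds_def inner_commute)
qed

lemma ds_tangent:
  assumes ut: "u \<in> {-1..1}" "t \<ge> 0"
  shows "ds \<alpha> (tangent \<alpha>) u t = (- curv \<alpha> u t) *\<^sub>R normal \<alpha> u t"
  using complex_orthonormal_decomp[OF inner_tangent_self[OF ut], of "ds \<alpha> (tangent \<alpha>) u t"]
    inner_ds_tangent_tangent[OF ut]
  by (simp add: curv_eq normal_def)

lemma ds_normal:
  assumes ut: "u \<in> {-1..1}" "t \<ge> 0"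
  shows "ds \<alpha> (normal \<alpha>) u t = curv \<alpha> u t *\<^sub>R tangent \<alpha> u t"
proof -
  have "ds \<alpha> (normal \<alpha>) u t = - \<i> * ds \<alpha> (tangent \<alpha>) u t + ds \<alpha> (\<lambda>u t. - \<i>) u t * tangent \<alpha> u t"
    unfolding normal_eq by (rule ds_bilinear[OF bounded_bilinear_mult strip_smooth_const strip_smooth_tangent ut])
  also have "ds \<alpha> (\<lambda>u t. - \<i>) u t = 0" using ut by (simp add: ds_def du_const)
  finally have "ds \<alpha> (normal \<alpha>) u t = - \<i> * ((- curv \<alpha> u t) *\<^sub>R normal \<alpha> u t)"
    by (simp add: ds_tangent[OF ut])
  then show ?thesis by (simp add: normal_def scaleR_conv_of_real algebra_simps)
qed


lemma has_integral_lint: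
  assumes "continuous_on {-1..1} (\<lambda>u. f u t)" "t \<ge> 0"
  shows "((\<lambda>u. f u t * speed \<alpha> u t) has_integral lint \<alpha> f t) {-1..1}"
  unfolding lint_def
  using strip_C_continuous_on_slice[OF strip_smooth_strip_C[OF strip_smooth_speed] assms(2)] assms(1)
  by (intro integrable_integral integrable_continuous_interval continuous_intros)

lemma abs_curv_sub_kbar_le_osc_sup:
  assumes "u \<in> {-1..1}" "t \<ge> 0"
  shows "\<bar>curv \<alpha> u t - kbar \<alpha> t\<bar> \<le> osc_sup \<alpha> t"
proof -
  have "continuous_on {-1..1} (\<lambda>u. \<bar>curv \<alpha> u t - kbar \<alpha> t\<bar>)"
    using strip_C_continuous_on_slice[OF strip_smooth_strip_C[OF strip_smooth_curv] assms(2)]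
    by (intro continuous_intros)
  then have "bdd_above ((\<lambda>u. \<bar>curv \<alpha> u t - kbar \<alpha> t\<bar>) ` {-1..1})"
    by (intro bounded_imp_bdd_above compact_imp_bounded compact_continuous_image) auto
  then show ?thesis unfolding osc_sup_def by (rule cSUP_upper[OF assms(1)])
qed

end

section \<open>Evolution under a normal flow\<close>

locale normal_flow = regular_strip_curve +
  fixes F :: "real \<Rightarrow> real \<Rightarrow> real"
  assumes strip_smooth_velocity: "strip_smooth F"
    and dt_curve: "\<And>u t. u \<in> {-1..1} \<Longrightarrow> t \<ge> 0 \<Longrightarrow> dt \<alpha> u t = F u t *\<^sub>R normal \<alpha> u t"
begin

lemma dt_du_curve:
  assumes ut: "u \<in> {-1..1}" "t \<ge> 0"
  shows "dt (du \<alpha>) u t =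
    speed \<alpha> u t *\<^sub>R ((F u t * curv \<alpha> u t) *\<^sub>R tangent \<alpha> u t + ds \<alpha> F u t *\<^sub>R normal \<alpha> u t)"
proof -
  have "dt (du \<alpha>) u t = du (dt \<alpha>) u t" by (rule strip_smooth_dt_du_commute[OF smooth ut])
  also have "\<dots> = du (\<lambda>u t. F u t *\<^sub>R normal \<alpha> u t) u t" by (rule du_cong[OF dt_curve ut])
  also have "\<dots> = F u t *\<^sub>R du (normal \<alpha>) u t + du F u t *\<^sub>R normal \<alpha> u t"
    by (rule du_bilinear[OF bounded_bilinear_scaleR strip_smooth_velocity strip_smooth_normal ut])
  finally show ?thesis
    using ut by (simp add: du_eq_speed_ds ds_normal scaleR_add_right algebra_simps)
qed

lemma dt_speed:
  assumes ut: "u \<in> {-1..1}" "t \<ge> 0"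
  shows "dt (speed \<alpha>) u t = speed \<alpha> u t * F u t * curv \<alpha> u t"
proof -
  have "(\<lambda>u s. speed \<alpha> u s * speed \<alpha> u s) = (\<lambda>u s. du \<alpha> u s \<bullet> du \<alpha> u s)"
    by (auto simp: fun_eq_iff speed_def dot_square_norm power2_eq_square)
  then have "speed \<alpha> u t * dt (speed \<alpha>) u t + dt (speed \<alpha>) u t * speed \<alpha> u t
      = du \<alpha> u t \<bullet> dt (du \<alpha>) u t + dt (du \<alpha>) u t \<bullet> du \<alpha> u t"
    using dt_bilinear[OF bounded_bilinear_mult strip_smooth_speed strip_smooth_speed ut]
      dt_bilinear[OF bounded_bilinear_inner strip_smooth_du[OF smooth] strip_smooth_du[OF smooth] ut]
    by metis
  also have "\<dots> = 2 * (speed \<alpha> u t * speed \<alpha> u t) * F u t * curv \<alpha> u t"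
    using inner_tangent_self[OF ut] inner_normal_tangent[of \<alpha> u t]
    by (simp add: du_curve[OF ut] dt_du_curve[OF ut] inner_add_right inner_add_left inner_commute algebra_simps)
  finally have "speed \<alpha> u t * (dt (speed \<alpha>) u t - speed \<alpha> u t * F u t * curv \<alpha> u t) = 0"
    by (simp add: algebra_simps)
  then show ?thesis using speed_pos[OF ut] by simp
qed

lemma dt_inverse_speed:
  assumes ut: "u \<in> {-1..1}" "t \<ge> 0"
  shows "dt (\<lambda>u t. inverse (speed \<alpha> u t)) u t = - (F u t * curv \<alpha> u t) / speed \<alpha> u t"
proof -
  have "speed \<alpha> u t \<noteq> 0" using speed_pos[OF ut] by simp
  from DERIV_inverse_fun[OF strip_smooth_real_derivatives(2)[OF strip_smooth_speed ut] this]
  have "dt (\<lambda>u t. inverse (speed \<alpha> u t)) u t = - (dt (speed \<alpha>) u t * inverse (speed \<alpha> u t ^ 2))"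
    by (intro dt_eqI[OF ut(2)]) (simp add: has_real_derivative_iff_has_vector_derivative power2_eq_square)
  then show ?thesis using \<open>speed \<alpha> u t \<noteq> 0\<close> by (simp add: dt_speed[OF ut] field_simps power2_eq_square)
qed

lemma dt_ds_commute:
  fixes f :: "real \<Rightarrow> real \<Rightarrow> 'a::euclidean_space"
  assumes f: "strip_smooth f" and ut: "u \<in> {-1..1}" "t \<ge> 0"
  shows "dt (ds \<alpha> f) u t = ds \<alpha> (dt f) u t - (curv \<alpha> u t * F u t) *\<^sub>R ds \<alpha> f u t"
proof -
  have "dt (ds \<alpha> f) u t = inverse (speed \<alpha> u t) *\<^sub>R dt (du f) u t
      + dt (\<lambda>u t. inverse (speed \<alpha> u t)) u t *\<^sub>R du f u t"
    unfolding ds_eq_inverse_speed[of \<alpha> f]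
    by (rule dt_bilinear[OF bounded_bilinear_scaleR strip_smooth_inverse_speed strip_smooth_du[OF f] ut])
  then show ?thesis
    by (simp add: strip_smooth_dt_du_commute[OF f ut] ds_eq_inverse_speed dt_inverse_speed[OF ut]
        scaleR_scaleR divide_inverse algebra_simps)
qed

lemma dt_tangent:
  assumes ut: "u \<in> {-1..1}" "t \<ge> 0"
  shows "dt (tangent \<alpha>) u t = ds \<alpha> F u t *\<^sub>R normal \<alpha> u t"
proof -
  have "dt (tangent \<alpha>) u t = ds \<alpha> (dt \<alpha>) u t - (curv \<alpha> u t * F u t) *\<^sub>R tangent \<alpha> u t"
    unfolding tangent_def by (rule dt_ds_commute[OF smooth ut])
  also have "ds \<alpha> (dt \<alpha>) u t = F u t *\<^sub>R ds \<alpha> (normal \<alpha>) u t + ds \<alpha> F u t *\<^sub>R normal \<alpha> u t"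
    using ds_cong[OF dt_curve ut] ds_bilinear[OF bounded_bilinear_scaleR strip_smooth_velocity strip_smooth_normal ut]
    by simp
  finally show ?thesis by (simp add: ds_normal[OF ut])
qed

lemma dt_normal:
  assumes ut: "u \<in> {-1..1}" "t \<ge> 0"
  shows "dt (normal \<alpha>) u t = (- ds \<alpha> F u t) *\<^sub>R tangent \<alpha> u t"
proof -
  have "dt (normal \<alpha>) u t = - \<i> * dt (tangent \<alpha>) u t + dt (\<lambda>u t. - \<i>) u t * tangent \<alpha> u t"
    unfolding normal_eq by (rule dt_bilinear[OF bounded_bilinear_mult strip_smooth_const strip_smooth_tangent ut])
  also have "dt (\<lambda>u t. - \<i>) u t = 0" using ut by (simp add: dt_const)
  finally have "dt (normal \<alpha>) u t = - \<i> * (ds \<alpha> F u t *\<^sub>R normal \<alpha> u t)"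
    by (simp add: dt_tangent[OF ut])
  then show ?thesis by (simp add: normal_def scaleR_conv_of_real algebra_simps)
qed

lemma dt_curv:
  assumes ut: "u \<in> {-1..1}" "t \<ge> 0"
  shows "dt (curv \<alpha>) u t = - (ds \<alpha> (ds \<alpha> F) u t + curv \<alpha> u t ^ 2 * F u t)"
proof -
  have sT: "strip_smooth (ds \<alpha> (tangent \<alpha>))" by (rule strip_smooth_ds[OF strip_smooth_tangent])
  have "dt (curv \<alpha>) u t = - (ds \<alpha> (tangent \<alpha>) u t \<bullet> dt (normal \<alpha>) u t + dt (ds \<alpha> (tangent \<alpha>)) u t \<bullet> normal \<alpha> u t)"
    unfolding curv_eq
    using dt_minus[OF strip_smooth_inner[OF sT strip_smooth_normal] ut]
      dt_bilinear[OF bounded_bilinear_inner sT strip_smooth_normal ut]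
    by simp
  also have "dt (ds \<alpha> (tangent \<alpha>)) u t
      = ds \<alpha> (dt (tangent \<alpha>)) u t - (curv \<alpha> u t * F u t) *\<^sub>R ds \<alpha> (tangent \<alpha>) u t"
    by (rule dt_ds_commute[OF strip_smooth_tangent ut])
  also have "ds \<alpha> (dt (tangent \<alpha>)) u t = ds \<alpha> F u t *\<^sub>R ds \<alpha> (normal \<alpha>) u t + ds \<alpha> (ds \<alpha> F) u t *\<^sub>R normal \<alpha> u t"
    using ds_cong[OF dt_tangent ut]
      ds_bilinear[OF bounded_bilinear_scaleR strip_smooth_ds[OF strip_smooth_velocity] strip_smooth_normal ut]
    by simp
  finally show ?thesis
    using inner_normal_tangent[of \<alpha> u t] inner_normal_self[of \<alpha> u t] inner_tangent_self[OF ut]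
    by (simp add: ds_normal[OF ut] ds_tangent[OF ut] dt_normal[OF ut] inner_add_left inner_diff_left
        power2_eq_square algebra_simps)
qed

lemma dt_kd1:
  assumes "u \<in> {-1..1}" "t \<ge> 0"
  shows "dt (kd \<alpha> 1) u t = ds \<alpha> (dt (curv \<alpha>)) u t - kd \<alpha> 0 u t * F u t * kd \<alpha> 1 u t"
  using dt_ds_commute[OF strip_smooth_curv assms] by (simp add: kd_Suc kd_0)

(* Differentiating <T, c> = 0 in time gives F_s <nu, c> = 0, and <nu, c> is nonzero because c
   is orthogonal to T. *)

lemma ds_velocity_eq_0_if_tangent_orthogonal:
  assumes t: "t \<ge> 0" and u: "u \<in> {-1..1}" and "c \<noteq> 0"
    and orth: "\<And>s. s \<ge> 0 \<Longrightarrow> tangent \<alpha> u s \<bullet> c = 0"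
  shows "ds \<alpha> F u t = 0"
proof -
  have "((\<lambda>s. tangent \<alpha> u s \<bullet> c) has_vector_derivative dt (tangent \<alpha>) u t \<bullet> c) (at t within {0..})"
    by (rule bounded_linear.has_vector_derivative[OF bounded_linear_inner_left
          strip_smooth_derivatives(2)[OF strip_smooth_tangent u t]])
  moreover have "((\<lambda>s. tangent \<alpha> u s \<bullet> c) has_vector_derivative 0) (at t within {0..})"
    by (rule has_vector_derivative_transform[OF _ _ has_vector_derivative_const]) (use t orth in auto)
  ultimately have "dt (tangent \<alpha>) u t \<bullet> c = 0"
    using vector_derivative_unique_within[OF at_within_atLeast_neq_bot[OF t]] by blast
  then have "ds \<alpha> F u t * (normal \<alpha> u t \<bullet> c) = 0"
    by (simp add: dt_tangent[OF u t])
  moreover have "normal \<alpha> u t \<bullet> c \<noteq> 0"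
  proof
    assume "normal \<alpha> u t \<bullet> c = 0"
    then have "c = 0"
      using complex_orthonormal_decomp[OF inner_tangent_self[OF u t], of c] orth[OF t]
      by (simp add: inner_commute normal_def)
    then show False using \<open>c \<noteq> 0\<close> by simp
  qed
  ultimately show ?thesis by simp
qed

end

section \<open>The length-penalised elastic flow in a cone\<close>

definition elastic_velocity :: "real \<Rightarrow> (real \<Rightarrow> real \<Rightarrow> complex) \<Rightarrow> real \<Rightarrow> real \<Rightarrow> real" where
  "elastic_velocity lam \<alpha> u t = kd \<alpha> 2 u t + curv \<alpha> u t ^ 3 / 2 - lam * curv \<alpha> u t"

definition elastic_bulk :: "real \<Rightarrow> real \<Rightarrow> real \<Rightarrow> real \<Rightarrow> real \<Rightarrow> real \<Rightarrow> real" where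
  "elastic_bulk lam kb k0 k1 k2 k3 = -2 * k3^2 + 5 * (k0^2 - kb^2) * k2^2 - 5 * kb^2 * k1 * k3
    - 5/3 * k1^4 - 11/2 * k0^4 * k1^2 - 2 * lam * k2^2 + 7 * lam * k0^2 * k1^2"

lemma elastic_bulk_le:
  fixes lam kb osc k0 k1 k2 k3 :: real
  assumes "lam \<ge> 0" "(k0 - kb)^2 \<le> osc^2"
  shows "elastic_bulk lam kb k0 k1 k2 k3 \<le> - 1/8 * k3^2 - 13/6 * kb^4 * k1^2 - 2 * lam * k2^2
    + 14 * lam * (osc^2 + kb^2) * k1^2 - 22 * kb^3 * ((k0 - kb) * k1^2)
    + 5 * ((k0 - kb)^2 * k2^2) + 10 * kb * ((k0 - kb) * k2^2)"
proof -
  define S where "S = 15/8 * (k3 + 4/3 * kb^2 * k1)^2 + 5/3 * k1^4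
    + 11/2 * (k0 - kb)^2 * (2 * kb^2 + (kb + k0)^2) * k1^2
    + lam * k1^2 * (14 * (osc^2 - (k0 - kb)^2) + 7 * (2 * kb - k0)^2)"
  have "S \<ge> 0" unfolding S_def using assms by (intro add_nonneg_nonneg mult_nonneg_nonneg) auto
  moreover have "- 1/8 * k3^2 - 13/6 * kb^4 * k1^2 - 2 * lam * k2^2
    + 14 * lam * (osc^2 + kb^2) * k1^2 - 22 * kb^3 * ((k0 - kb) * k1^2)
    + 5 * ((k0 - kb)^2 * k2^2) + 10 * kb * ((k0 - kb) * k2^2) - elastic_bulk lam kb k0 k1 k2 k3 = S"
    unfolding S_def elastic_bulk_def by (simp add: field_simps eval_nat_numeral)
  ultimately show ?thesis by linarith
qed

locale elastic_cone_flow_solution =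
  fixes lam \<theta>1 \<theta>2 :: real and \<alpha> :: "real \<Rightarrow> real \<Rightarrow> complex"
  assumes flow: "elastic_cone_flow lam \<theta>1 \<theta>2 \<alpha>"
begin

sublocale regular_strip_curve \<alpha>
  using flow by unfold_locales (auto simp: elastic_cone_flow_def smooth_strip_imp_strip_smooth)

sublocale normal_flow \<alpha> "elastic_velocity lam \<alpha>"
proof
  show "strip_smooth (elastic_velocity lam \<alpha>)"
    unfolding elastic_velocity_def[abs_def]
    by (intro strip_smooth_diff strip_smooth_add strip_smooth_mult strip_smooth_const strip_smooth_kd
        strip_smooth_curv strip_smooth_power strip_smooth_divide_const)
  show "dt \<alpha> u t = elastic_velocity lam \<alpha> u t *\<^sub>R normal \<alpha> u t" if "u \<in> {-1..1}" "t \<ge> 0" for u t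
    using flow that by (simp add: elastic_cone_flow_def elastic_velocity_def)
qed

lemma elastic_velocity_eq:
  "elastic_velocity lam \<alpha> u t = kd \<alpha> 2 u t + kd \<alpha> 0 u t ^ 3 / 2 - lam * kd \<alpha> 0 u t"
  by (simp add: elastic_velocity_def kd_0)

lemma ds_elastic_velocity:
  assumes "u \<in> {-1..1}" "t \<ge> 0"
  shows "ds \<alpha> (elastic_velocity lam \<alpha>) u t
    = kd \<alpha> 3 u t - lam * kd \<alpha> 1 u t + 3/2 * kd \<alpha> 0 u t ^ 2 * kd \<alpha> 1 u t"
  unfolding elastic_velocity_eq[abs_def]
  by (rule ds_eqI[OF assms])
     (auto intro!: derivative_eq_intros has_real_derivative_kd[OF assms] simp: field_simps eval_nat_numeral)

lemma ds_ds_elastic_velocity: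
  assumes "u \<in> {-1..1}" "t \<ge> 0"
  shows "ds \<alpha> (ds \<alpha> (elastic_velocity lam \<alpha>)) u t
    = kd \<alpha> 4 u t - lam * kd \<alpha> 2 u t + 3 * kd \<alpha> 0 u t * kd \<alpha> 1 u t ^ 2 + 3/2 * kd \<alpha> 0 u t ^ 2 * kd \<alpha> 2 u t"
proof -
  have "ds \<alpha> (ds \<alpha> (elastic_velocity lam \<alpha>)) u t
      = ds \<alpha> (\<lambda>w s. kd \<alpha> 3 w s - lam * kd \<alpha> 1 w s + 3/2 * kd \<alpha> 0 w s ^ 2 * kd \<alpha> 1 w s) u t"
    by (rule ds_cong[OF ds_elastic_velocity assms])
  also have "\<dots> = kd \<alpha> 4 u t - lam * kd \<alpha> 2 u t + 3 * kd \<alpha> 0 u t * kd \<alpha> 1 u t ^ 2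
      + 3/2 * kd \<alpha> 0 u t ^ 2 * kd \<alpha> 2 u t"
    by (rule ds_eqI[OF assms])
       (auto intro!: derivative_eq_intros has_real_derivative_kd[OF assms] simp: field_simps eval_nat_numeral)
  finally show ?thesis .
qed

lemma dt_curv_elastic:
  assumes "u \<in> {-1..1}" "t \<ge> 0"
  shows "dt (curv \<alpha>) u t = - kd \<alpha> 4 u t + lam * kd \<alpha> 2 u t - 3 * kd \<alpha> 0 u t * kd \<alpha> 1 u t ^ 2
    - 5/2 * kd \<alpha> 0 u t ^ 2 * kd \<alpha> 2 u t + lam * kd \<alpha> 0 u t ^ 3 - 1/2 * kd \<alpha> 0 u t ^ 5"
  using dt_curv[OF assms] ds_ds_elastic_velocity[OF assms]
  by (simp add: elastic_velocity_eq kd_0[symmetric] field_simps eval_nat_numeral)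

lemma ds_dt_curv_elastic:
  assumes "u \<in> {-1..1}" "t \<ge> 0"
  shows "ds \<alpha> (dt (curv \<alpha>)) u t = - kd \<alpha> 5 u t + lam * kd \<alpha> 3 u t - 3 * kd \<alpha> 1 u t ^ 3
    - 11 * kd \<alpha> 0 u t * kd \<alpha> 1 u t * kd \<alpha> 2 u t - 5/2 * kd \<alpha> 0 u t ^ 2 * kd \<alpha> 3 u t
    + 3 * lam * kd \<alpha> 0 u t ^ 2 * kd \<alpha> 1 u t - 5/2 * kd \<alpha> 0 u t ^ 4 * kd \<alpha> 1 u t"
proof -
  have "ds \<alpha> (dt (curv \<alpha>)) u t = ds \<alpha> (\<lambda>w s. - kd \<alpha> 4 w s + lam * kd \<alpha> 2 w s - 3 * kd \<alpha> 0 w s * kd \<alpha> 1 w s ^ 2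
    - 5/2 * kd \<alpha> 0 w s ^ 2 * kd \<alpha> 2 w s + lam * kd \<alpha> 0 w s ^ 3 - 1/2 * kd \<alpha> 0 w s ^ 5) u t"
    by (rule ds_cong[OF dt_curv_elastic assms])
  also have "\<dots> = - kd \<alpha> 5 u t + lam * kd \<alpha> 3 u t - 3 * kd \<alpha> 1 u t ^ 3
    - 11 * kd \<alpha> 0 u t * kd \<alpha> 1 u t * kd \<alpha> 2 u t - 5/2 * kd \<alpha> 0 u t ^ 2 * kd \<alpha> 3 u t
    + 3 * lam * kd \<alpha> 0 u t ^ 2 * kd \<alpha> 1 u t - 5/2 * kd \<alpha> 0 u t ^ 4 * kd \<alpha> 1 u t"
    by (rule ds_eqI[OF assms])
       (auto intro!: derivative_eq_intros has_real_derivative_kd[OF assms] simp: field_simps eval_nat_numeral)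
  finally show ?thesis .
qed

lemma ds_elastic_velocity_endpoints:
  assumes "t \<ge> 0"
  shows "ds \<alpha> (elastic_velocity lam \<alpha>) (-1) t = 0" "ds \<alpha> (elastic_velocity lam \<alpha>) 1 t = 0"
  using flow assms
  by (auto simp: elastic_cone_flow_def intro!: ds_velocity_eq_0_if_tangent_orthogonal[of _ _ "cis _"])

(* The boundary terms of the integrations by parts that reduce the evolution of k_s^2 |alpha_u| to
   the bulk term.  The last summand is not forced by them: its s-derivative
   5 kbar^2 (k_ss^2 + k_s k_sss) turns 5 k^2 k_ss^2 into 5 (k^2 - kbar^2) k_ss^2 in the bulk term. *)
definition flux :: "real \<Rightarrow> real \<Rightarrow> real" where
  "flux u t = 2 * kd \<alpha> 1 u t * dt (curv \<alpha>) u t + 2 * kd \<alpha> 2 u t * ds \<alpha> (elastic_velocity lam \<alpha>) u t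
    + 2 * lam * kd \<alpha> 1 u t * kd \<alpha> 2 u t + kd \<alpha> 0 u t ^ 5 * kd \<alpha> 1 u t
    - 2 * lam * kd \<alpha> 0 u t ^ 3 * kd \<alpha> 1 u t - 3 * kd \<alpha> 0 u t ^ 2 * kd \<alpha> 1 u t * kd \<alpha> 2 u t
    + 5/3 * kd \<alpha> 0 u t * kd \<alpha> 1 u t ^ 3 + 5 * kbar \<alpha> t ^ 2 * kd \<alpha> 1 u t * kd \<alpha> 2 u t"

lemma flux_endpoints: "t \<ge> 0 \<Longrightarrow> flux (-1) t = 0 \<and> flux 1 t = 0"
  using flow ds_elastic_velocity_endpoints[of t] by (simp add: flux_def elastic_cone_flow_def)

lemma dt_kd1_sq_speed:
  assumes ut: "u \<in> {-1..1}" "t \<ge> 0"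
  shows "dt (\<lambda>u s. kd \<alpha> 1 u s ^ 2 * speed \<alpha> u s) u t = speed \<alpha> u t *
    (2 * kd \<alpha> 1 u t * dt (kd \<alpha> 1) u t + kd \<alpha> 1 u t ^ 2 * kd \<alpha> 0 u t * elastic_velocity lam \<alpha> u t)"
proof (rule dt_eqI[OF ut(2)])
  have "((\<lambda>s. kd \<alpha> 1 u s ^ 2 * speed \<alpha> u s) has_real_derivative
      2 * kd \<alpha> 1 u t * dt (kd \<alpha> 1) u t * speed \<alpha> u t + kd \<alpha> 1 u t ^ 2 * dt (speed \<alpha>) u t) (at t within {0..})"
    by (auto intro!: derivative_eq_intros strip_smooth_real_derivatives(2)[OF strip_smooth_kd ut]
        strip_smooth_real_derivatives(2)[OF strip_smooth_speed ut])
  then show "((\<lambda>s. kd \<alpha> 1 u s ^ 2 * speed \<alpha> u s) has_vector_derivative speed \<alpha> u t *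
    (2 * kd \<alpha> 1 u t * dt (kd \<alpha> 1) u t + kd \<alpha> 1 u t ^ 2 * kd \<alpha> 0 u t * elastic_velocity lam \<alpha> u t))
    (at t within {0..})"
    by (simp add: has_real_derivative_iff_has_vector_derivative[symmetric] dt_speed[OF ut] kd_0 algebra_simps)
qed

lemma has_real_derivative_flux:
  assumes ut: "u \<in> {-1..1}" "t \<ge> 0"
  shows "((\<lambda>w. flux w t) has_real_derivative
    dt (\<lambda>u s. kd \<alpha> 1 u s ^ 2 * speed \<alpha> u s) u t
    - speed \<alpha> u t * elastic_bulk lam (kbar \<alpha> t) (kd \<alpha> 0 u t) (kd \<alpha> 1 u t) (kd \<alpha> 2 u t) (kd \<alpha> 3 u t))
    (at u within {-1..1})"
  unfolding flux_def dt_kd1_sq_speed[OF ut] dt_kd1[OF ut]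
  by (auto intro!: derivative_eq_intros has_real_derivative_kd[OF ut]
      has_real_derivative_ds[OF strip_smooth_dt[OF strip_smooth_curv] ut]
      has_real_derivative_ds[OF strip_smooth_ds[OF strip_smooth_velocity] ut]
      simp: dt_curv_elastic[OF ut] ds_dt_curv_elastic[OF ut]
        ds_elastic_velocity[OF ut] ds_ds_elastic_velocity[OF ut] elastic_velocity_eq elastic_bulk_def field_simps eval_nat_numeral)


lemma has_real_derivative_lint_kd1_sq:
  assumes t: "t \<ge> 0"
  shows "((\<lambda>s. lint \<alpha> (\<lambda>u r. (kd \<alpha> 1 u r)\<^sup>2) s) has_real_derivative
    integral {-1..1} (\<lambda>u. speed \<alpha> u t *
      elastic_bulk lam (kbar \<alpha> t) (kd \<alpha> 0 u t) (kd \<alpha> 1 u t) (kd \<alpha> 2 u t) (kd \<alpha> 3 u t)))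
    (at t within {0..})"
proof -
  define g where "g u s = kd \<alpha> 1 u s ^ 2 * speed \<alpha> u s" for u s
  define b where "b u = speed \<alpha> u t *
    elastic_bulk lam (kbar \<alpha> t) (kd \<alpha> 0 u t) (kd \<alpha> 1 u t) (kd \<alpha> 2 u t) (kd \<alpha> 3 u t)" for u
  have "strip_smooth g"
    unfolding g_def[abs_def] by (intro strip_smooth_mult strip_smooth_power strip_smooth_kd strip_smooth_speed)
  have "b integrable_on {-1..1}"
    unfolding b_def elastic_bulk_def
    using strip_C_continuous_on_slice[OF strip_smooth_strip_C[OF strip_smooth_speed] t]
      strip_C_continuous_on_slice[OF strip_smooth_strip_C[OF strip_smooth_kd] t]
    by (intro integrable_continuous_interval continuous_intros) auto
  moreover have "((\<lambda>u. dt g u t - b u) has_integral flux 1 t - flux (-1) t) {-1..1}"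
    using has_real_derivative_flux t
    by (intro fundamental_theorem_of_calculus)
       (auto simp: g_def[abs_def] b_def has_real_derivative_iff_has_vector_derivative[symmetric])
  ultimately have "((\<lambda>u. dt g u t) has_integral integral {-1..1} b) {-1..1}"
    using has_integral_add[OF integrable_integral] flux_endpoints[OF t] by fastforce
  then have "integral {-1..1} (\<lambda>u. dt g u t) = integral {-1..1} b" by (rule integral_unique)
  then show ?thesis
    using has_real_derivative_integral_strip[OF \<open>strip_smooth g\<close> t]
    by (simp add: lint_def g_def b_def[abs_def])
qed

lemma integral_elastic_bulk_le:
  assumes "lam > 0" and t: "t \<ge> 0"
  shows "integral {-1..1} (\<lambda>u. speed \<alpha> u t *
      elastic_bulk lam (kbar \<alpha> t) (kd \<alpha> 0 u t) (kd \<alpha> 1 u t) (kd \<alpha> 2 u t) (kd \<alpha> 3 u t))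
    \<le> - 1/8 * lint \<alpha> (\<lambda>u r. (kd \<alpha> 3 u r)\<^sup>2) t
      - 13/6 * kbar \<alpha> t ^ 4 * lint \<alpha> (\<lambda>u r. (kd \<alpha> 1 u r)\<^sup>2) t
      - 2 * lam * lint \<alpha> (\<lambda>u r. (kd \<alpha> 2 u r)\<^sup>2) t
      + 14 * lam * ((osc_sup \<alpha> t)\<^sup>2 + (kbar \<alpha> t)\<^sup>2) * lint \<alpha> (\<lambda>u r. (kd \<alpha> 1 u r)\<^sup>2) t
      - 22 * kbar \<alpha> t ^ 3 * lint \<alpha> (\<lambda>u r. (curv \<alpha> u r - kbar \<alpha> r) * (kd \<alpha> 1 u r)\<^sup>2) t
      + 5 * lint \<alpha> (\<lambda>u r. (curv \<alpha> u r - kbar \<alpha> r)\<^sup>2 * (kd \<alpha> 2 u r)\<^sup>2) t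
      + 10 * kbar \<alpha> t * lint \<alpha> (\<lambda>u r. (curv \<alpha> u r - kbar \<alpha> r) * (kd \<alpha> 2 u r)\<^sup>2) t"
proof -
  have kd: "continuous_on {-1..1} (\<lambda>u. kd \<alpha> j u t)" for j
    using strip_C_continuous_on_slice[OF strip_smooth_strip_C[OF strip_smooth_kd] t] .
  have sp: "continuous_on {-1..1} (\<lambda>u. speed \<alpha> u t)"
    using strip_C_continuous_on_slice[OF strip_smooth_strip_C[OF strip_smooth_speed] t] .
  note k = kd[of 0, unfolded kd_0]
  define r where "r u = - 1/8 * ((kd \<alpha> 3 u t)\<^sup>2 * speed \<alpha> u t)
      - 13/6 * kbar \<alpha> t ^ 4 * ((kd \<alpha> 1 u t)\<^sup>2 * speed \<alpha> u t)
      - 2 * lam * ((kd \<alpha> 2 u t)\<^sup>2 * speed \<alpha> u t)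
      + 14 * lam * ((osc_sup \<alpha> t)\<^sup>2 + (kbar \<alpha> t)\<^sup>2) * ((kd \<alpha> 1 u t)\<^sup>2 * speed \<alpha> u t)
      - 22 * kbar \<alpha> t ^ 3 * ((curv \<alpha> u t - kbar \<alpha> t) * (kd \<alpha> 1 u t)\<^sup>2 * speed \<alpha> u t)
      + 5 * ((curv \<alpha> u t - kbar \<alpha> t)\<^sup>2 * (kd \<alpha> 2 u t)\<^sup>2 * speed \<alpha> u t)
      + 10 * kbar \<alpha> t * ((curv \<alpha> u t - kbar \<alpha> t) * (kd \<alpha> 2 u t)\<^sup>2 * speed \<alpha> u t)" for u
  have "((\<lambda>u. speed \<alpha> u t *
      elastic_bulk lam (kbar \<alpha> t) (kd \<alpha> 0 u t) (kd \<alpha> 1 u t) (kd \<alpha> 2 u t) (kd \<alpha> 3 u t))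
      has_integral integral {-1..1} (\<lambda>u. speed \<alpha> u t *
      elastic_bulk lam (kbar \<alpha> t) (kd \<alpha> 0 u t) (kd \<alpha> 1 u t) (kd \<alpha> 2 u t) (kd \<alpha> 3 u t))) {-1..1}"
    unfolding elastic_bulk_def
    by (intro integrable_integral integrable_continuous_interval continuous_intros kd sp)
  moreover have "(r has_integral - 1/8 * lint \<alpha> (\<lambda>u r. (kd \<alpha> 3 u r)\<^sup>2) t
      - 13/6 * kbar \<alpha> t ^ 4 * lint \<alpha> (\<lambda>u r. (kd \<alpha> 1 u r)\<^sup>2) t
      - 2 * lam * lint \<alpha> (\<lambda>u r. (kd \<alpha> 2 u r)\<^sup>2) t
      + 14 * lam * ((osc_sup \<alpha> t)\<^sup>2 + (kbar \<alpha> t)\<^sup>2) * lint \<alpha> (\<lambda>u r. (kd \<alpha> 1 u r)\<^sup>2) t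
      - 22 * kbar \<alpha> t ^ 3 * lint \<alpha> (\<lambda>u r. (curv \<alpha> u r - kbar \<alpha> r) * (kd \<alpha> 1 u r)\<^sup>2) t
      + 5 * lint \<alpha> (\<lambda>u r. (curv \<alpha> u r - kbar \<alpha> r)\<^sup>2 * (kd \<alpha> 2 u r)\<^sup>2) t
      + 10 * kbar \<alpha> t * lint \<alpha> (\<lambda>u r. (curv \<alpha> u r - kbar \<alpha> r) * (kd \<alpha> 2 u r)\<^sup>2) t) {-1..1}"
    unfolding r_def[abs_def]
    by (intro has_integral_add has_integral_diff has_integral_mult_right has_integral_lint[OF _ t]
        continuous_intros kd k)
  moreover have "speed \<alpha> u t *
      elastic_bulk lam (kbar \<alpha> t) (kd \<alpha> 0 u t) (kd \<alpha> 1 u t) (kd \<alpha> 2 u t) (kd \<alpha> 3 u t) \<le> r u"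
    if u: "u \<in> {-1..1}" for u
  proof -
    have "(kd \<alpha> 0 u t - kbar \<alpha> t)\<^sup>2 \<le> (osc_sup \<alpha> t)\<^sup>2"
      using abs_curv_sub_kbar_le_osc_sup[OF u t] power_mono[OF _ abs_ge_zero, of _ _ 2]
      by (fastforce simp: kd_0)
    from elastic_bulk_le[OF _ this, of lam] \<open>lam > 0\<close>
    have "speed \<alpha> u t *
        elastic_bulk lam (kbar \<alpha> t) (kd \<alpha> 0 u t) (kd \<alpha> 1 u t) (kd \<alpha> 2 u t) (kd \<alpha> 3 u t)
      \<le> speed \<alpha> u t * (- 1/8 * (kd \<alpha> 3 u t)^2 - 13/6 * kbar \<alpha> t^4 * (kd \<alpha> 1 u t)^2
        - 2 * lam * (kd \<alpha> 2 u t)^2 + 14 * lam * ((osc_sup \<alpha> t)^2 + (kbar \<alpha> t)^2) * (kd \<alpha> 1 u t)^2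
        - 22 * kbar \<alpha> t^3 * ((kd \<alpha> 0 u t - kbar \<alpha> t) * (kd \<alpha> 1 u t)^2)
        + 5 * ((kd \<alpha> 0 u t - kbar \<alpha> t)^2 * (kd \<alpha> 2 u t)^2)
        + 10 * kbar \<alpha> t * ((kd \<alpha> 0 u t - kbar \<alpha> t) * (kd \<alpha> 2 u t)^2))"
      using speed_pos[OF u t] by (intro mult_left_mono) auto
    then show ?thesis by (simp add: r_def kd_0 algebra_simps)
  qed
  ultimately show ?thesis by (rule has_integral_le)
qed

end

theorem mainTheorem3:
  fixes lam \<theta>1 \<theta>2 :: real and \<alpha> :: "real \<Rightarrow> real \<Rightarrow> complex"
  assumes "lam > 0"
    and "0 \<le> \<theta>2" and "\<theta>2 < \<theta>1" and "\<theta>1 < 2 * pi"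
    and "elastic_cone_flow lam \<theta>1 \<theta>2 \<alpha>"
  shows "\<forall>t\<ge>0. \<exists>D.
    ((\<lambda>s. lint \<alpha> (\<lambda>u r. (kd \<alpha> 1 u r)\<^sup>2) s) has_real_derivative D) (at t within {0..}) \<and>
    D \<le> - 1/8 * lint \<alpha> (\<lambda>u r. (kd \<alpha> 3 u r)\<^sup>2) t
         - 13/6 * kbar \<alpha> t ^ 4 * lint \<alpha> (\<lambda>u r. (kd \<alpha> 1 u r)\<^sup>2) t
         - 2 * lam * lint \<alpha> (\<lambda>u r. (kd \<alpha> 2 u r)\<^sup>2) t
         + 14 * lam * ((osc_sup \<alpha> t)\<^sup>2 + (kbar \<alpha> t)\<^sup>2) * lint \<alpha> (\<lambda>u r. (kd \<alpha> 1 u r)\<^sup>2) t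
         - 22 * kbar \<alpha> t ^ 3 * lint \<alpha> (\<lambda>u r. (curv \<alpha> u r - kbar \<alpha> r) * (kd \<alpha> 1 u r)\<^sup>2) t
         + 5 * lint \<alpha> (\<lambda>u r. (curv \<alpha> u r - kbar \<alpha> r)\<^sup>2 * (kd \<alpha> 2 u r)\<^sup>2) t
         + 10 * kbar \<alpha> t * lint \<alpha> (\<lambda>u r. (curv \<alpha> u r - kbar \<alpha> r) * (kd \<alpha> 2 u r)\<^sup>2) t"
proof -
  interpret elastic_cone_flow_solution lam \<theta>1 \<theta>2 \<alpha>
    by unfold_locales (rule assms(5))
  show ?thesis
    using has_real_derivative_lint_kd1_sq integral_elastic_bulk_le[OF assms(1)] by blast
qed

end
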